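(* Let $T\in(0,\infty)$ and $Q\in\mathbb N$. Then for all $n\in\mathbb N_0$ and $k\in\mathbb N_0\cap[0,2Q-n)$, $$\sum_{t\in[0,T]}\bar q^{n,Q}(t)\,\frac{(T-t)^k}{k!}=\frac{T^{n+k}}{(n+k)!}.$$
   Context: For $n\in\mathbb N$ let $c^n_1,\dots,c^n_n\in[-1,1]$ be the $n$ distinct roots of $x\mapsto\frac{1}{2^nn!}\frac{d^n}{dx^n}[(x^2-1)^n]$. For $a\in\mathbb R$, $b\in[a,\infty)$ let $q^{n,[a,b]}\colon[a,b]\to\mathbb R$ be $q^{n,[a,b]}(t)=\int_a^b\prod_{i:\,c^n_i\neq\frac{2t-(a+b)}{b-a}}\frac{2x-(b-a)c^n_i-(a+b)}{2t-(b-a)c^n_i-(a+b)}\,dx$ if $a<b$ and $\frac{2t-(a+b)}{b-a}\in\{c^n_1,\dots,c^n_n\}$, and $q^{n,[a,b]}(t)=0$ otherwise. Sums $\sum_{t\in[a,b]}$ range over the finitely many points with nonzero weight. For $Q\in\mathbb N$ define $\bar q^{n,Q}\colon[0,T]\to\mathbb R$ by $\bar q^{0,Q}(t)=\mathbb 1_{\{0\}}(t)$ and $\bar q^{n,Q}(t)=\sum_{s\in[0,t]}\bar q^{n-1,Q}(s)\,q^{Q,[s,T]}(t)$ for $n\in\mathbb N$. *)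

theory Defs
  imports "HOL-Analysis.Analysis" "HOL-Computational_Algebra.Polynomial"
begin

definition legendre :: "nat \<Rightarrow> real poly" where
  "legendre n = smult (1 / (2 ^ n * fact n)) ((pderiv ^^ n) ([:-1, 0, 1:] ^ n))"

definition legendre_roots :: "nat \<Rightarrow> real set" where
  "legendre_roots n = {x. poly (legendre n) x = 0}"

definition gl_weight :: "nat \<Rightarrow> real \<Rightarrow> real \<Rightarrow> real \<Rightarrow> real" where
  "gl_weight n a b t =
     (let s = (2 * t - (a + b)) / (b - a) in
      if a < b \<and> s \<in> legendre_roots n then
        integral {a..b} (\<lambda>x. \<Prod>c\<in>legendre_roots n - {s}.
           (2 * x - (b - a) * c - (a + b)) / (2 * t - (b - a) * c - (a + b)))
      else 0)"

text \<open>Iterated weights \<bar>q^{n,Q} on [0,T]; sums range over the points of nonzero weight.\<close>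
primrec qbar :: "real \<Rightarrow> nat \<Rightarrow> nat \<Rightarrow> real \<Rightarrow> real" where
  "qbar T Q 0 t = (if t = 0 then 1 else 0)"
| "qbar T Q (Suc n) t =
     (\<Sum>s\<in>{s\<in>{0..t}. qbar T Q n s \<noteq> 0}. qbar T Q n s * gl_weight Q s T t)"

end

theory Submission
  imports Defs
begin

text \<open>The weights q^{Q,[s,T]} form the Q-point Gauss--Legendre rule on [s,T], which integrates
  polynomials of degree < 2Q exactly. Applied to t \<mapsto> (T-t)^k/k! it returns (T-s)^(k+1)/(k+1)!,
  so one step of the recursion turns the k-th moment of qbar^(n+1) into the (k+1)-st moment
  of qbar^n, and induction on n ends at qbar^0, the unit mass at 0.
  Exactness of the Gauss rule rests on the Legendre polynomial P_Q: Rodrigues' formula and Rolle's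
  theorem give Q simple roots in (-1,1), integration by parts gives orthogonality to all
  polynomials of degree < Q, and division with remainder by P_Q reduces exactness to Lagrange
  interpolation at its roots.\<close>

section \<open>Calculus of real polynomials\<close>

lemma poly_integrable: "poly (p :: real poly) integrable_on {a..b}"
  by (intro integrable_continuous_interval continuous_on_poly continuous_on_id)

lemma has_integral_poly_pderiv:
  fixes p :: "real poly"
  assumes "a \<le> b"
  shows "(poly (pderiv p) has_integral (poly p b - poly p a)) {a..b}"
  using assms poly_DERIV[of p]
  by (intro fundamental_theorem_of_calculus)
     (auto simp: has_real_derivative_iff_has_vector_derivative intro: has_vector_derivative_at_within)

lemma poly_pderiv_root_between:
  fixes p :: "real poly"
  assumes "a < b" "poly p a = poly p b"
  obtains z where "a < z" "z < b" "poly (pderiv p) z = 0"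
  using poly_MVT[OF assms(1), of p] assms by auto

text \<open>Rolle's theorem between consecutive roots.\<close>
lemma card_roots_pderiv:
  fixes p :: "real poly"
  assumes "finite S" "S \<noteq> {}" "\<And>x. x \<in> S \<Longrightarrow> poly p x = 0"
  shows "\<exists>S'. finite S' \<and> S' \<subseteq> {Min S<..<Max S} \<and> card S' = card S - 1 \<and>
              (\<forall>x\<in>S'. poly (pderiv p) x = 0)"
  using assms
proof (induction "card S" arbitrary: S rule: less_induct)
  case less
  show ?case
  proof (cases "card S = 1")
    case True
    then show ?thesis by (intro exI[of _ "{}"]) auto
  next
    case False
    define S0 where "S0 = S - {Max S}"
    have S: "S = insert (Max S) S0" and Max_S0: "Max S \<notin> S0"
      using less.prems Max_in by (auto simp: S0_def)
    have "S0 \<noteq> {}"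
      using False S by (metis card.empty card_insert_disjoint finite.emptyI empty_iff One_nat_def)
    have "finite S0"
      using less.prems by (simp add: S0_def)
    have "Max S0 \<in> S0"
      using \<open>S0 \<noteq> {}\<close> \<open>finite S0\<close> by simp
    then have "Max S0 \<in> S" "Max S0 < Max S"
      using less.prems by (auto simp: S0_def intro: order.not_eq_order_implies_strict)
    moreover have "Min S0 \<le> Max S0"
      using \<open>S0 \<noteq> {}\<close> \<open>finite S0\<close> by simp
    ultimately have "Min S = Min S0"
      using S \<open>S0 \<noteq> {}\<close> \<open>finite S0\<close> by (metis Min_insert min.absorb2 order.strict_trans1 less_imp_le)
    obtain S1 where S1: "finite S1" "S1 \<subseteq> {Min S0<..<Max S0}" "card S1 = card S0 - 1"
      "\<forall>x\<in>S1. poly (pderiv p) x = 0"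
      using less.hyps[of S0] \<open>S0 \<noteq> {}\<close> \<open>finite S0\<close> less.prems by (auto simp: S0_def card_gt_0_iff)
    obtain z where z: "Max S0 < z" "z < Max S" "poly (pderiv p) z = 0"
    proof (rule poly_pderiv_root_between[OF \<open>Max S0 < Max S\<close>])
      show "poly p (Max S0) = poly p (Max S)"
        using less.prems \<open>Max S0 \<in> S\<close> Max_in by simp
    qed
    have "z \<notin> S1"
      using S1(2) z(1) by (auto simp del: Max_less_iff)
    have "insert z S1 \<subseteq> {Min S<..<Max S}"
      using S1(2) z(1,2) \<open>Max S0 < Max S\<close> \<open>Min S = Min S0\<close> \<open>Min S0 \<le> Max S0\<close>
      by (auto simp del: Max_less_iff Min_gr_iff)
    moreover have "card (insert z S1) = card S - 1"
      using S1(1,3) \<open>z \<notin> S1\<close> S Max_S0 \<open>finite S0\<close> \<open>S0 \<noteq> {}\<close>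
      by (metis card_insert_disjoint card_gt_0_iff Suc_pred diff_Suc_1)
    ultimately show ?thesis
      using S1(1,4) z(3) by (intro exI[of _ "insert z S1"]) auto
  qed
qed

lemma power_dvd_pderiv:
  fixes p r :: "'a::idom poly"
  assumes "r ^ Suc k dvd p"
  shows "r ^ k dvd pderiv p"
proof -
  obtain g where g: "p = r ^ Suc k * g"
    using assms by (auto simp: dvd_def)
  have "pderiv p = r ^ k * (r * pderiv g + g * smult (of_nat (Suc k)) (pderiv r))"
    by (simp only: g pderiv_mult pderiv_power_Suc) (simp add: algebra_simps)
  then show ?thesis
    by simp
qed

lemma power_dvd_higher_pderiv:
  fixes p r :: "'a::idom poly"
  assumes "r ^ m dvd p"
  shows "r ^ (m - j) dvd (pderiv ^^ j) p"
proof (induction j)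
  case 0
  then show ?case using assms by simp
next
  case (Suc j)
  show ?case
  proof (cases "j < m")
    case True
    then show ?thesis
      using Suc.IH power_dvd_pderiv[of r "m - Suc j"] by (simp add: Suc_diff_Suc)
  qed simp
qed

lemma poly_higher_pderiv_multiple_root:
  fixes p :: "'a::idom poly"
  assumes "[:-a, 1:] ^ m dvd p" "j < m"
  shows "poly ((pderiv ^^ j) p) a = 0"
proof -
  obtain g where "(pderiv ^^ j) p = [:-a, 1:] ^ (m - j) * g"
    using power_dvd_higher_pderiv[OF assms(1), of j] by (auto simp: dvd_def)
  then show ?thesis
    using assms(2) by simp
qed

lemma higher_pderiv_nonzero:
  fixes p :: "'a::{idom, ring_char_0} poly"
  assumes "p \<noteq> 0" "j \<le> degree p"
  shows "(pderiv ^^ j) p \<noteq> 0"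
  using assms(2)
proof (induction j)
  case (Suc j)
  then have "degree ((pderiv ^^ j) p) \<noteq> 0"
    by (simp add: degree_higher_pderiv)
  then show ?case
    by (simp add: pderiv_eq_0_iff)
qed (use assms in simp)

text \<open>Repeated integration by parts: the boundary terms vanish.\<close>
lemma higher_pderiv_orthogonal:
  fixes P q :: "real poly"
  assumes "a \<le> b" "degree q < m"
    and "\<And>j. j < m \<Longrightarrow> poly ((pderiv ^^ j) P) a = 0 \<and> poly ((pderiv ^^ j) P) b = 0"
  shows "((\<lambda>x. poly q x * poly ((pderiv ^^ m) P) x) has_integral 0) {a..b}"
  using assms(2,3)
proof (induction m arbitrary: q)
  case (Suc m)
  let ?D = "(pderiv ^^ m) P"
  have boundary: "(poly (pderiv (q * ?D)) has_integral 0) {a..b}"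
    using has_integral_poly_pderiv[OF assms(1), of "q * ?D"] Suc.prems(2) by simp
  have lower: "((\<lambda>x. poly (pderiv q) x * poly ?D x) has_integral 0) {a..b}"
  proof (cases "m = 0")
    case True
    then have "pderiv q = 0"
      using Suc.prems(1) by (simp add: pderiv_eq_0_iff)
    then show ?thesis by simp
  next
    case False
    then show ?thesis
      using Suc.IH Suc.prems by (simp add: degree_pderiv)
  qed
  show ?case
    using has_integral_diff[OF boundary lower] by (simp add: pderiv_mult algebra_simps)
qed simp

section \<open>Legendre polynomials\<close>

lemma poly_higher_pderiv_rodrigues_pm1:
  assumes "j < n" "x = 1 \<or> x = -1"
  shows "poly ((pderiv ^^ j) ([:-1, 0, 1:] ^ n)) (x :: real) = 0"
proof (rule poly_higher_pderiv_multiple_root[OF _ assms(1)])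
  have "[:-1, 0, 1:] ^ n = [:-1, 1:] ^ n * [:1, 1 :: real:] ^ n"
    by (simp add: power_mult_distrib[symmetric])
  then show "[:-x, 1:] ^ n dvd [:-1, 0, 1:] ^ n"
    using assms(2) by auto
qed

lemma higher_pderiv_rodrigues_roots:
  assumes "j \<le> n"
  shows "\<exists>Z. finite Z \<and> Z \<subseteq> {-1<..<1} \<and> card Z = j \<and>
             (\<forall>x\<in>Z. poly ((pderiv ^^ j) ([:-1, 0, 1:] ^ n)) x = (0 :: real))"
  using assms
proof (induction j)
  case 0
  then show ?case by (intro exI[of _ "{}"]) auto
next
  case (Suc j)
  have "j \<le> n"
    using Suc.prems by simp
  with Suc.IH obtain Z :: "real set" where Z: "finite Z" "Z \<subseteq> {-1<..<1}" "card Z = j"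
    "\<forall>x\<in>Z. poly ((pderiv ^^ j) ([:-1, 0, 1:] ^ n)) x = 0"
    by blast
  define S where "S = insert (-1) (insert 1 Z)"
  have "-1 \<notin> Z" "1 \<notin> Z"
    using Z(2) by force+
  then have "finite S" "S \<noteq> {}" "card S = Suc (Suc j)"
    using Z(1,3) by (auto simp: S_def)
  moreover have "Min S = -1"
    using Z(1,2) unfolding S_def by (intro Min_eqI) (auto simp: subset_iff less_imp_le)
  moreover have "Max S = 1"
    using Z(1,2) unfolding S_def by (intro Max_eqI) (auto simp: subset_iff less_imp_le)
  moreover have "\<forall>x\<in>S. poly ((pderiv ^^ j) ([:-1, 0, 1:] ^ n)) x = 0"
    using Z(4) poly_higher_pderiv_rodrigues_pm1[of j n] Suc.prems by (auto simp: S_def)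
  ultimately show ?case
    using card_roots_pderiv[of S "(pderiv ^^ j) ([:-1, 0, 1:] ^ n)"] by auto
qed

lemma legendre_nonzero: "legendre n \<noteq> 0"
  using higher_pderiv_nonzero[of "[:-1, 0, 1 :: real:] ^ n" n]
  by (simp add: legendre_def degree_power_eq)

lemma degree_legendre: "degree (legendre n) = n"
  by (simp add: legendre_def degree_higher_pderiv degree_power_eq)

lemma finite_legendre_roots: "finite (legendre_roots n)"
  using poly_roots_finite[OF legendre_nonzero] by (simp add: legendre_roots_def)

lemma legendre_roots_eq: "legendre_roots n = {x. poly ((pderiv ^^ n) ([:-1, 0, 1:] ^ n)) x = 0}"
  by (simp add: legendre_roots_def legendre_def)

lemma card_legendre_roots: "card (legendre_roots n) = n"
  and legendre_roots_subset: "legendre_roots n \<subseteq> {-1<..<1}"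
proof -
  obtain Z where Z: "finite Z" "Z \<subseteq> {-1<..<1}" "card Z = n" "Z \<subseteq> legendre_roots n"
    using higher_pderiv_rodrigues_roots[of n n] by (auto simp: legendre_roots_eq)
  have "card (legendre_roots n) \<le> n"
    using card_poly_roots_bound[OF legendre_nonzero] by (simp add: legendre_roots_def degree_legendre)
  then have "Z = legendre_roots n"
    using card_subset_eq[OF finite_legendre_roots Z(4)] Z(3) card_mono[OF finite_legendre_roots Z(4)]
    by simp
  then show "card (legendre_roots n) = n" "legendre_roots n \<subseteq> {-1<..<1}"
    using Z by auto
qed

lemma legendre_orthogonal:
  assumes "degree q < n"
  shows "((\<lambda>x. poly q x * poly (legendre n) x) has_integral 0) {-1..1}"
  using has_integral_mult_right[OF higher_pderiv_orthogonal[of "-1" 1 q n "[:-1, 0, 1:] ^ n"],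
      of "1 / (2 ^ n * fact n)"] assms poly_higher_pderiv_rodrigues_pm1[of _ n]
  by (simp add: legendre_def algebra_simps)

section \<open>Lagrange interpolation and Gauss quadrature\<close>

definition lagrange_basis :: "'a::field set \<Rightarrow> 'a \<Rightarrow> 'a poly" where
  "lagrange_basis R c = (\<Prod>d\<in>R - {c}. smult (1 / (c - d)) [:-d, 1:])"

lemma poly_lagrange_basis: "poly (lagrange_basis R c) x = (\<Prod>d\<in>R - {c}. (x - d) / (c - d))"
  by (simp add: lagrange_basis_def poly_prod diff_divide_distrib)

lemma poly_lagrange_basis_node:
  assumes "finite R" "c \<in> R" "c' \<in> R"
  shows "poly (lagrange_basis R c) c' = (if c' = c then 1 else 0)"
  using assms by (auto simp: poly_lagrange_basis)

lemma degree_lagrange_basis: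
  assumes "finite R" "c \<in> R"
  shows "degree (lagrange_basis R c) \<le> card R - 1"
proof -
  have "degree (lagrange_basis R c) \<le> (\<Sum>d\<in>R - {c}. degree (smult (1 / (c - d)) [:-d, 1:]))"
    unfolding lagrange_basis_def using assms(1)
      degree_prod_sum_le[of "R - {c}" "\<lambda>d. smult (1 / (c - d)) [:-d, 1:]"]
    by (simp only: o_def finite_Diff)
  also have "\<dots> \<le> (\<Sum>d\<in>R - {c}. 1)"
    by (intro sum_mono) (simp add: degree_smult_le)
  finally show ?thesis
    using assms by simp
qed

lemma lagrange_interpolation:
  fixes r :: "'a::field poly"
  assumes "finite R" "degree r < card R"
  shows "r = (\<Sum>c\<in>R. smult (poly r c) (lagrange_basis R c))"
proof -
  define P where "P = r - (\<Sum>c\<in>R. smult (poly r c) (lagrange_basis R c))"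
  have "degree (\<Sum>c\<in>R. smult (poly r c) (lagrange_basis R c)) \<le> card R - 1"
    using assms(1) degree_lagrange_basis
    by (intro degree_sum_le order.trans[OF degree_smult_le]) auto
  moreover have "degree r \<le> card R - 1"
    using assms(2) by linarith
  ultimately have "degree P < card R"
    using assms(2) degree_diff_le[of r "card R - 1"] unfolding P_def by fastforce
  moreover have "R \<subseteq> {x. poly P x = 0}"
  proof
    fix c' assume "c' \<in> R"
    then have "(\<Sum>c\<in>R. poly r c * poly (lagrange_basis R c) c') = poly r c'"
      using assms(1) by (simp add: poly_lagrange_basis_node if_distrib cong: if_cong)
    then show "c' \<in> {x. poly P x = 0}"
      by (simp add: P_def poly_sum)
  qed
  ultimately have "P = 0"
    using card_mono[OF poly_roots_finite] card_poly_roots_bound by (metis leD order.trans)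
  then show ?thesis
    by (simp add: P_def)
qed

text \<open>Write p = q L + r: the term q L integrates to 0 by orthogonality, and r is interpolated
  exactly at the roots of L, where it agrees with p.\<close>
lemma gauss_quadrature_exact:
  fixes L p :: "real poly"
  defines "R \<equiv> {x. poly L x = 0}"
  assumes orth: "\<And>q. degree q < degree L \<Longrightarrow> ((\<lambda>x. poly q x * poly L x) has_integral 0) {a..b}"
    and card: "card R = degree L"
    and deg: "degree p < 2 * degree L"
  shows "(\<Sum>c\<in>R. integral {a..b} (poly (lagrange_basis R c)) * poly p c) = integral {a..b} (poly p)"
proof -
  have "L \<noteq> 0"
    using deg by auto
  then have "finite R"
    by (simp add: R_def poly_roots_finite)
  define q where "q = p div L"
  define r where "r = p mod L"
  have p: "p = q * L + r"
    by (simp add: q_def r_def)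
  have "degree r < degree L"
    using degree_mod_less[OF \<open>L \<noteq> 0\<close>, of p] deg by (auto simp: r_def)
  have "degree q < degree L"
  proof (cases "q = 0")
    case False
    then have "degree (q * L) = degree q + degree L"
      using \<open>L \<noteq> 0\<close> by (simp add: degree_mult_eq)
    moreover have "degree p = degree (q * L)"
      unfolding p using \<open>degree r < degree L\<close> calculation by (intro degree_add_eq_left) simp
    ultimately show ?thesis
      using deg by simp
  qed (use deg in simp)
  have "poly p = (\<lambda>x. poly q x * poly L x + poly r x)"
    by (rule ext) (simp add: p)
  then have "integral {a..b} (poly p) = integral {a..b} (\<lambda>x. poly q x * poly L x) + integral {a..b} (poly r)"
    using has_integral_integrable[OF orth[OF \<open>degree q < degree L\<close>]] poly_integrable
    by (simp add: integral_add)
  also have "\<dots> = integral {a..b} (poly (\<Sum>c\<in>R. smult (poly r c) (lagrange_basis R c)))"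
    using integral_unique[OF orth[OF \<open>degree q < degree L\<close>]] \<open>finite R\<close> \<open>degree r < degree L\<close> card
    by (simp flip: lagrange_interpolation)
  also have "\<dots> = integral {a..b} (\<lambda>x. \<Sum>c\<in>R. poly r c * poly (lagrange_basis R c) x)"
    by (rule arg_cong[where f = "integral {a..b}"]) (simp add: fun_eq_iff poly_sum)
  also have "\<dots> = (\<Sum>c\<in>R. poly r c * integral {a..b} (poly (lagrange_basis R c)))"
    using \<open>finite R\<close> poly_integrable by (simp add: integral_sum integrable_on_mult_right)
  also have "\<dots> = (\<Sum>c\<in>R. integral {a..b} (poly (lagrange_basis R c)) * poly p c)"
    by (intro sum.cong) (auto simp: p R_def)
  finally show ?thesis ..
qed

section \<open>Gauss--Legendre quadrature on an interval\<close>

lemma has_integral_affine_from_unit_interval: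
  fixes a b J :: real
  assumes "a < b" "(g has_integral J) {-1..1}"
  shows "((\<lambda>x. g ((2 * x - (a + b)) / (b - a))) has_integral (b - a) / 2 * J) {a..b}"
proof -
  define m where "m = 2 / (b - a)"
  define c where "c = - (a + b) / (b - a)"
  have "m > 0"
    using assms(1) by (simp add: m_def)
  from has_integral_affinity'[of g J "-1" 1, OF _ this, of c] assms(2)
  have "((\<lambda>x. g (m * x + c)) has_integral inverse m * J) {inverse m * (- 1 - c)..inverse m * (1 - c)}"
    by simp
  moreover have "inverse m * (- 1 - c) = a" "inverse m * (1 - c) = b" "inverse m * J = (b - a) / 2 * J"
    using assms(1) by (simp_all add: m_def c_def field_simps)
  moreover have "(\<lambda>x. g (m * x + c)) = (\<lambda>x. g ((2 * x - (a + b)) / (b - a)))"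
    by (simp add: m_def c_def diff_divide_distrib add_divide_distrib algebra_simps)
  ultimately show ?thesis
    by simp
qed

definition gl_nodes :: "nat \<Rightarrow> real \<Rightarrow> real \<Rightarrow> real set" where
  "gl_nodes Q a b = (\<lambda>c. ((b - a) * c + a + b) / 2) ` legendre_roots Q"

lemma finite_gl_nodes: "finite (gl_nodes Q a b)"
  by (simp add: gl_nodes_def finite_legendre_roots)

lemma gl_nodes_subset:
  assumes "a < b"
  shows "gl_nodes Q a b \<subseteq> {a<..<b}"
proof
  fix t assume "t \<in> gl_nodes Q a b"
  then obtain c where c: "c \<in> legendre_roots Q" "t = ((b - a) * c + a + b) / 2"
    by (auto simp: gl_nodes_def)
  then have "-1 < c" "c < 1"
    using legendre_roots_subset by force+
  then have "(b - a) * -1 < (b - a) * c" "(b - a) * c < (b - a) * 1"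
    using assms by (intro mult_strict_left_mono; simp)+
  then show "t \<in> {a<..<b}"
    using c(2) by simp
qed

lemma gl_weight_nonzero_imp:
  assumes "gl_weight Q a b t \<noteq> 0"
  shows "a < b" "t \<in> gl_nodes Q a b"
proof -
  show "a < b"
    using assms by (auto simp: gl_weight_def Let_def split: if_splits)
  moreover have "(2 * t - (a + b)) / (b - a) \<in> legendre_roots Q"
    using assms by (auto simp: gl_weight_def Let_def split: if_splits)
  moreover have "t = ((b - a) * ((2 * t - (a + b)) / (b - a)) + a + b) / 2"
    using calculation(1) by (simp add: field_simps)
  ultimately show "t \<in> gl_nodes Q a b"
    unfolding gl_nodes_def by blast
qed

lemma gl_weight_eq_0_if_before:
  assumes "t \<le> s"
  shows "gl_weight Q s T t = 0"
proof (rule ccontr)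
  assume "gl_weight Q s T t \<noteq> 0"
  then have "t \<in> {s<..<T}"
    using gl_weight_nonzero_imp gl_nodes_subset by blast
  then show False
    using assms by simp
qed

lemma gl_weight_node:
  assumes "a < b" "c \<in> legendre_roots Q"
  shows "gl_weight Q a b (((b - a) * c + a + b) / 2)
           = (b - a) / 2 * integral {-1..1} (poly (lagrange_basis (legendre_roots Q) c))"
proof -
  define R where "R = legendre_roots Q"
  define t where "t = ((b - a) * c + a + b) / 2"
  have "(2 * t - (a + b)) / (b - a) = c"
    using assms(1) by (simp add: t_def field_simps)
  then have "gl_weight Q a b t = integral {a..b}
      (\<lambda>x. \<Prod>d\<in>R - {c}. (2 * x - (b - a) * d - (a + b)) / (2 * t - (b - a) * d - (a + b)))"
    using assms by (simp add: gl_weight_def Let_def R_def)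
  also have "\<dots> = integral {a..b} (\<lambda>x. poly (lagrange_basis R c) ((2 * x - (a + b)) / (b - a)))"
  proof (rule arg_cong[where f = "integral {a..b}"], rule ext, unfold poly_lagrange_basis,
      rule prod.cong[OF refl])
    fix x d assume "d \<in> R - {c}"
    have "2 * t - (b - a) * d - (a + b) = (b - a) * (c - d)"
      by (simp add: t_def field_simps)
    moreover have "2 * x - (b - a) * d - (a + b) = (b - a) * ((2 * x - (a + b)) / (b - a) - d)"
      using assms(1) by (simp add: field_simps)
    ultimately show "(2 * x - (b - a) * d - (a + b)) / (2 * t - (b - a) * d - (a + b))
               = ((2 * x - (a + b)) / (b - a) - d) / (c - d)"
      using assms(1) \<open>d \<in> R - {c}\<close> by simp
  qed
  also have "\<dots> = (b - a) / 2 * integral {-1..1} (poly (lagrange_basis R c))"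
    using has_integral_affine_from_unit_interval[OF assms(1)
        integrable_integral[OF poly_integrable]] by (rule integral_unique)
  finally show ?thesis
    by (simp add: t_def R_def)
qed

lemma gauss_legendre_exact:
  fixes p :: "real poly"
  assumes "a < b" "degree p < 2 * Q" "finite B" "gl_nodes Q a b \<subseteq> B"
  shows "(\<Sum>t\<in>B. gl_weight Q a b t * poly p t) = integral {a..b} (poly p)"
proof -
  define R where "R = legendre_roots Q"
  define node where "node c = ((b - a) * c + a + b) / 2" for c
  define P where "P = pcompose p [:(a + b) / 2, (b - a) / 2:]"
  have "degree P < 2 * degree (legendre Q)"
    using assms(1,2) by (simp add: P_def degree_pcompose degree_legendre)
  have poly_P: "poly P c = poly p (node c)" for c
    unfolding P_def poly_pcompose node_def by (rule arg_cong[where f = "poly p"]) (simp add: field_simps)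
  have "(\<Sum>t\<in>B. gl_weight Q a b t * poly p t) = (\<Sum>t\<in>gl_nodes Q a b. gl_weight Q a b t * poly p t)"
    using assms(3,4) gl_weight_nonzero_imp(2) by (intro sum.mono_neutral_right) fastforce+
  also have "\<dots> = (\<Sum>c\<in>R. gl_weight Q a b (node c) * poly p (node c))"
  proof -
    have "gl_nodes Q a b = node ` R" "inj_on node R"
      using assms(1) by (auto simp: gl_nodes_def node_def R_def inj_on_def)
    then show ?thesis
      by (simp add: sum.reindex)
  qed
  also have "\<dots> = (b - a) / 2 * (\<Sum>c\<in>R. integral {-1..1} (poly (lagrange_basis R c)) * poly P c)"
    unfolding sum_distrib_left
    using assms(1) by (intro sum.cong refl) (simp add: gl_weight_node node_def poly_P R_def)
  also have "\<dots> = (b - a) / 2 * integral {-1..1} (poly P)"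
    using gauss_quadrature_exact[OF legendre_orthogonal _ \<open>degree P < 2 * degree (legendre Q)\<close>]
    by (simp add: R_def legendre_roots_def card_legendre_roots[unfolded legendre_roots_def] degree_legendre)
  also have "\<dots> = integral {a..b} (\<lambda>x. poly P ((2 * x - (a + b)) / (b - a)))"
    by (rule integral_unique[symmetric], rule has_integral_affine_from_unit_interval[OF assms(1)])
      (rule integrable_integral[OF poly_integrable])
  also have "\<dots> = integral {a..b} (poly p)"
    using assms(1) by (simp add: poly_P node_def)
  finally show ?thesis .
qed

lemma gl_power_moment:
  fixes s T :: real
  assumes "s \<le> T" "k < 2 * Q" "finite B" "gl_nodes Q s T \<subseteq> B"
  shows "(\<Sum>t\<in>B. gl_weight Q s T t * ((T - t) ^ k / fact k)) = (T - s) ^ Suc k / fact (Suc k)"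
proof (cases "s < T")
  case False
  then show ?thesis
    using assms(1) gl_weight_nonzero_imp(1)[of Q s T] by force
next
  case True
  define p where "p = smult (1 / fact k) ([:T, -1:] ^ k)"
  define P where "P = smult (- 1 / fact (Suc k)) ([:T, -1:] ^ Suc k)"
  have poly_p: "poly p t = (T - t) ^ k / fact k" for t
    by (simp add: p_def)
  have "degree p \<le> k"
    using degree_power_le[of "[:T, -1:]" k] by (simp add: p_def)
  have "pderiv [:T, -1:] = [:-1:]"
    by (simp add: pderiv_pCons)
  then have "pderiv P = smult (- 1 / fact (Suc k)) (smult (of_nat (Suc k)) ([:T, -1:] ^ k) * [:-1:])"
    by (simp only: P_def pderiv_smult pderiv_power_Suc)
  also have "\<dots> = p"
    by (simp add: p_def del: of_nat_Suc)
  finally have "pderiv P = p" .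
  then have "integral {s..T} (poly p) = poly P T - poly P s"
    using has_integral_poly_pderiv[OF assms(1), of P] by (simp add: integral_unique)
  also have "\<dots> = (T - s) ^ Suc k / fact (Suc k)"
    by (simp add: P_def) (simp add: algebra_simps)
  finally show ?thesis
    using gauss_legendre_exact[OF True _ assms(3,4), of p] \<open>degree p \<le> k\<close> assms(2)
    by (simp add: poly_p)
qed

section \<open>The iterated weights\<close>

declare qbar.simps(2) [simp del]

lemma qbar_Suc_nonzero_imp:
  assumes "qbar T Q (Suc n) t \<noteq> 0"
  obtains s where "qbar T Q n s \<noteq> 0" "t \<in> gl_nodes Q s T" "s < t" "t < T"
proof -
  obtain s where "qbar T Q n s \<noteq> 0" "gl_weight Q s T t \<noteq> 0"
    using assms sum.neutral unfolding qbar.simps(2) by force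
  moreover from this(2) have "t \<in> {s<..<T}" "t \<in> gl_nodes Q s T"
    using gl_nodes_subset gl_weight_nonzero_imp by blast+
  ultimately show thesis
    using that by simp
qed

lemma qbar_support:
  assumes "T \<ge> 0"
  shows "finite {t. qbar T Q n t \<noteq> 0} \<and> {t. qbar T Q n t \<noteq> 0} \<subseteq> {0..T}"
proof (induction n)
  case 0
  then show ?case using assms by auto
next
  case (Suc n)
  have "{t. qbar T Q (Suc n) t \<noteq> 0} \<subseteq> (\<Union>s\<in>{s. qbar T Q n s \<noteq> 0}. gl_nodes Q s T) \<inter> {0..T}"
  proof
    fix t assume "t \<in> {t. qbar T Q (Suc n) t \<noteq> 0}"
    then obtain s where "qbar T Q n s \<noteq> 0" "t \<in> gl_nodes Q s T" "s < t" "t < T"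
      unfolding mem_Collect_eq by (rule qbar_Suc_nonzero_imp)
    then show "t \<in> (\<Union>s\<in>{s. qbar T Q n s \<noteq> 0}. gl_nodes Q s T) \<inter> {0..T}"
      using Suc.IH by force
  qed
  moreover have "finite (\<Union>s\<in>{s. qbar T Q n s \<noteq> 0}. gl_nodes Q s T)"
    using Suc.IH finite_gl_nodes by blast
  ultimately show ?case
    by (meson finite_Int finite_subset le_infE)
qed

lemma qbar_Suc_eq_sum:
  assumes "T \<ge> 0"
  shows "qbar T Q (Suc n) t = (\<Sum>s\<in>{s. qbar T Q n s \<noteq> 0}. qbar T Q n s * gl_weight Q s T t)"
  unfolding qbar.simps(2)
proof (rule sum.mono_neutral_left)
  show "finite {s. qbar T Q n s \<noteq> 0}"
    using qbar_support[OF assms] by blast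
  show "\<forall>s\<in>{s. qbar T Q n s \<noteq> 0} - {s \<in> {0..t}. qbar T Q n s \<noteq> 0}. qbar T Q n s * gl_weight Q s T t = 0"
  proof
    fix s assume s: "s \<in> {s. qbar T Q n s \<noteq> 0} - {s \<in> {0..t}. qbar T Q n s \<noteq> 0}"
    then have "s \<in> {0..T}"
      using qbar_support[OF assms, of Q n] by blast
    then have "t \<le> s"
      using s by auto
    then show "qbar T Q n s * gl_weight Q s T t = 0"
      by (simp add: gl_weight_eq_0_if_before)
  qed
qed blast

lemma qbar_moment:
  assumes "T \<ge> 0" "n + k < 2 * Q"
  shows "(\<Sum>t\<in>{t. qbar T Q n t \<noteq> 0}. qbar T Q n t * (T - t) ^ k / fact k) = T ^ (n + k) / fact (n + k)"
  using assms(2)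
proof (induction n arbitrary: k)
  case 0
  have "{t. qbar T Q 0 t \<noteq> 0} = {0}"
    by auto
  then show ?case
    by simp
next
  case (Suc n)
  define A where "A = {s. qbar T Q n s \<noteq> 0}"
  define B where "B = (\<Union>s\<in>A. gl_nodes Q s T)"
  have "finite A" "A \<subseteq> {0..T}"
    using qbar_support[OF assms(1)] by (auto simp: A_def)
  then have "finite B"
    by (simp add: B_def finite_gl_nodes)
  have "{t. qbar T Q (Suc n) t \<noteq> 0} \<subseteq> B"
    unfolding A_def B_def by (blast elim: qbar_Suc_nonzero_imp)
  then have "(\<Sum>t\<in>{t. qbar T Q (Suc n) t \<noteq> 0}. qbar T Q (Suc n) t * (T - t) ^ k / fact k)
      = (\<Sum>t\<in>B. qbar T Q (Suc n) t * (T - t) ^ k / fact k)"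
    using \<open>finite B\<close> by (intro sum.mono_neutral_left) auto
  also have "\<dots> = (\<Sum>t\<in>B. \<Sum>s\<in>A. qbar T Q n s * (gl_weight Q s T t * ((T - t) ^ k / fact k)))"
    by (simp add: qbar_Suc_eq_sum[OF assms(1)] sum_distrib_right sum_divide_distrib mult.assoc A_def)
  also have "\<dots> = (\<Sum>s\<in>A. qbar T Q n s * (\<Sum>t\<in>B. gl_weight Q s T t * ((T - t) ^ k / fact k)))"
    by (simp add: sum.swap[of _ B] sum_distrib_left)
  also have "\<dots> = (\<Sum>s\<in>A. qbar T Q n s * (T - s) ^ Suc k / fact (Suc k))"
  proof (rule sum.cong[OF refl])
    fix s assume "s \<in> A"
    then have "s \<le> T" "gl_nodes Q s T \<subseteq> B"
      using \<open>A \<subseteq> {0..T}\<close> by (auto simp: B_def)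
    then show "qbar T Q n s * (\<Sum>t\<in>B. gl_weight Q s T t * ((T - t) ^ k / fact k))
        = qbar T Q n s * (T - s) ^ Suc k / fact (Suc k)"
      using gl_power_moment[of s T k Q B] \<open>finite B\<close> Suc.prems by simp
  qed
  also have "\<dots> = T ^ (Suc n + k) / fact (Suc n + k)"
    using Suc.IH[of "Suc k"] Suc.prems by (simp add: A_def)
  finally show ?case .
qed

theorem lemma3p2:
  fixes T :: real and Q n k :: nat
  assumes "T > 0" and "Q \<ge> 1" and "n + k < 2 * Q"
  shows "(\<Sum>t\<in>{t\<in>{0..T}. qbar T Q n t \<noteq> 0}. qbar T Q n t * (T - t) ^ k / fact k)
           = T ^ (n + k) / fact (n + k)"
proof -
  have "{t\<in>{0..T}. qbar T Q n t \<noteq> 0} = {t. qbar T Q n t \<noteq> 0}"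
    using qbar_support[of T Q n] assms(1) by auto
  then show ?thesis
    using qbar_moment[of T n k Q] assms(1,3) by simp
qed

end
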